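(* Let $G=(V,E)$ be a finite undirected graph and run the neighborhood-expansion (NE) edge-partitioning algorithm described in the context to build partitions $p_1,\dots,p_k$ of $E$. Suppose that during the construction of partition $p_i$ a vertex $v$ is added to the secondary set $S_i$. Then the adjacency list of $v$ (the list $N(v)$ of its neighbors) is accessed again during the construction of some subsequent partition $p_j$, $j>i$, only if $v$ is still in $S_i$ and not in the core set $C$ when the construction of $p_i$ has been completed, i.e., only if $v$ was not moved to $C$ during the construction of $p_i$.
   Context: Edge partitioning: given an undirected graph $G=(V,E)$ and an integer $k>1$, the edge set is divided into disjoint sets (partitions) $p_1,\dots,p_k$ whose union is $E$. For a vertex $v$, $N(v)$ denotes its set of neighbors in the current graph and $d(v)$ its degree. The NE algorithm maintains a global vertex set $C$ (the core set, initially empty) and, for each partition $p_i$, a vertex set $S_i$ (the secondary set of $p_i$, initially empty); vertices are only ever added to these sets, never removed. Each vertex $u\in S_i$ carries a number $d_{ext}(u,S_i)$ (its external degree). Partitions are built in sequence $i=1,\dots,k$. While building $p_i$, as long as $|p_i|<|E|/k$: if $S_i\setminus C\neq\emptyset$, choose $v_{min}\in S_i\setminus C$ minimizing $d_{ext}(v,S_i)$ and call MoveToCore$(v_{min})$; otherwise (Initialize) choose any vertex $v\notin C$ and call MoveToCore$(v)$. MoveToCore$(v)$: add $v$ to $C$; then for each $u\in N(v)\setminus(C\cup S_i)$ call MoveToSecondary$(u)$. MoveToSecondary$(v)$: add $v$ to $S_i$; set $d_{ext}(v,S_i)\gets d(v)$; then for each $u\in N(v)\cap(C\cup S_i)$: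 decrement $d_{ext}(u,S_i)$ and $d_{ext}(v,S_i)$ by one; if $|p_i|<|E|/k$, assign edge $(u,v)$ to $p_i$, otherwise assign it to $p_{i+1}$ and add $u$ and $v$ to $S_{i+1}$ ("spill-over"); in both cases remove the edge $(u,v)$ from the graph. The adjacency list of a vertex $v$ is said to be accessed when the algorithm iterates over $N(v)$, which happens exactly within MoveToCore$(v)$ and MoveToSecondary$(v)$. *)

theory Defs
  imports Main "HOL.Real"
begin

text \<open>Undirected edges are 2-element sets.\<close>

datatype 'a event =
    Access nat 'a            \<comment> \<open>during construction of p_i, adjacency list of v accessed\<close>
  | SecAdd nat nat 'a        \<comment> \<open>during construction of p_i, v added to S_l\<close>
  | CoreAdd nat 'a           \<comment> \<open>during construction of p_i, v added to C\<close>
  | PartDone nat "'a set" "'a set"  \<comment> \<open>construction of p_i completed; snapshot of C and S_i\<close>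

record 'a nestate =
  rem  :: "'a set set"
  core :: "'a set"
  sec  :: "nat \<Rightarrow> 'a set"
  dext :: "nat \<Rightarrow> 'a \<Rightarrow> int"
  part :: "nat \<Rightarrow> 'a set set"
  cur  :: nat
  log  :: "'a event list"

definition nbrs :: "('a, 'b) nestate_scheme \<Rightarrow> 'a \<Rightarrow> 'a set" where
  "nbrs st v = {u. {u, v} \<in> rem st}"

definition below :: "'a set set \<Rightarrow> nat \<Rightarrow> 'a nestate \<Rightarrow> bool" where
  "below E k st \<longleftrightarrow> real (card (part st (cur st))) < real (card E) / real k"

text \<open>One iteration of the loop in MoveToSecondary(v), for neighbour u.\<close>
definition sec_edge :: "'a set set \<Rightarrow> nat \<Rightarrow> 'a \<Rightarrow> 'a nestate \<Rightarrow> 'a \<Rightarrow> 'a nestate" where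
  "sec_edge E k v st u =
    (let i = cur st; d = dext st i; d' = d(u := d u - 1); d'' = d'(v := d' v - 1);
         st1 = st\<lparr>dext := (dext st)(i := d''), rem := rem st - {{u, v}}\<rparr>
     in if below E k st
        then st1\<lparr>part := (part st)(i := insert {u, v} (part st i))\<rparr>
        else st1\<lparr>part := (part st)(Suc i := insert {u, v} (part st (Suc i))),
                 sec := (sec st)(Suc i := sec st (Suc i) \<union> {u, v}),
                 log := log st @ [SecAdd i (Suc i) u, SecAdd i (Suc i) v]\<rparr>)"

text \<open>MoveToSecondary(v): the neighbours in C \<union> S_i may be processed in any order.\<close>
definition move_sec :: "'a set set \<Rightarrow> nat \<Rightarrow> 'a nestate \<Rightarrow> 'a \<Rightarrow> 'a nestate \<Rightarrow> bool" where
  "move_sec E k st v st' \<longleftrightarrow>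
    (let i = cur st;
         st0 = st\<lparr>sec := (sec st)(i := insert v (sec st i)),
                  dext := (dext st)(i := (dext st i)(v := int (card (nbrs st v)))),
                  log := log st @ [SecAdd i i v, Access i v]\<rparr>
     in \<exists>us. distinct us \<and> set us = nbrs st0 v \<inter> (core st0 \<union> sec st0 i) \<and>
             st' = fold (\<lambda>u s. sec_edge E k v s u) us st0)"

inductive sec_seq :: "'a set set \<Rightarrow> nat \<Rightarrow> 'a nestate \<Rightarrow> 'a list \<Rightarrow> 'a nestate \<Rightarrow> bool"
  for E k where
  sec_seq_Nil: "sec_seq E k st [] st"
| sec_seq_Cons: "move_sec E k st u st1 \<Longrightarrow> sec_seq E k st1 us st2 \<Longrightarrow> sec_seq E k st (u # us) st2"

text \<open>MoveToCore(v): the neighbours outside C \<union> S_i may be processed in any order.\<close>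
definition move_core :: "'a set set \<Rightarrow> nat \<Rightarrow> 'a nestate \<Rightarrow> 'a \<Rightarrow> 'a nestate \<Rightarrow> bool" where
  "move_core E k st v st' \<longleftrightarrow>
    (let i = cur st;
         st0 = st\<lparr>core := insert v (core st), log := log st @ [CoreAdd i v, Access i v]\<rparr>
     in \<exists>us. distinct us \<and> set us = nbrs st0 v - (core st0 \<union> sec st0 i) \<and>
             sec_seq E k st0 us st')"

inductive ne_step :: "'a set \<Rightarrow> 'a set set \<Rightarrow> nat \<Rightarrow> 'a nestate \<Rightarrow> 'a nestate \<Rightarrow> bool"
  for V E k where
  expand: "cur st \<le> k \<Longrightarrow> below E k st \<Longrightarrow> v \<in> sec st (cur st) - core st \<Longrightarrow>
           (\<forall>w \<in> sec st (cur st) - core st. dext st (cur st) v \<le> dext st (cur st) w) \<Longrightarrow>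
           move_core E k st v st' \<Longrightarrow> ne_step V E k st st'"
| initialize: "cur st \<le> k \<Longrightarrow> below E k st \<Longrightarrow> sec st (cur st) - core st = {} \<Longrightarrow>
           v \<in> V - core st \<Longrightarrow> move_core E k st v st' \<Longrightarrow> ne_step V E k st st'"
| next_part: "cur st < k \<Longrightarrow> \<not> below E k st \<Longrightarrow>
           st' = st\<lparr>cur := Suc (cur st),
                    log := log st @ [PartDone (cur st) (core st) (sec st (cur st))]\<rparr> \<Longrightarrow>
           ne_step V E k st st'"

definition ne_init :: "'a set set \<Rightarrow> 'a nestate" where
  "ne_init E = \<lparr>rem = E, core = {}, sec = (\<lambda>_. {}), dext = (\<lambda>_ _. 0),
                part = (\<lambda>_. {}), cur = 1, log = []\<rparr>"

definition ne_reachable :: "'a set \<Rightarrow> 'a set set \<Rightarrow> nat \<Rightarrow> 'a nestate \<Rightarrow> bool" where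
  "ne_reachable V E k st \<longleftrightarrow> (ne_step V E k)\<^sup>*\<^sup>* (ne_init E) st"

end

theory Submission
  imports Defs
begin

text \<open>MoveToCore is only called on a vertex outside C and MoveToSecondary only on vertices
  outside C \<union> S_i, so during the construction of a partition every adjacency-list access
  concerns a vertex outside the core set as it was before the current step. As C only
  grows, a vertex accessed after p_i is completed was not in the snapshot of C taken at that
  moment; and since S_i only grows, a vertex added to S_i while p_i was built is in the
  snapshot of S_i. Both facts are invariants of the event log of every reachable state.\<close>

fun phase_event :: "nat \<Rightarrow> 'a set \<Rightarrow> 'a set \<Rightarrow> 'a event \<Rightarrow> bool" where
  "phase_event c C S (Access j x) \<longleftrightarrow> j = c \<and> x \<notin> C"
| "phase_event c C S (SecAdd i l x) \<longleftrightarrow> i = c \<and> (l = c \<longrightarrow> x \<in> S)"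
| "phase_event c C S (CoreAdd i x) \<longleftrightarrow> i = c"
| "phase_event c C S (PartDone i Cs Ss) \<longleftrightarrow> False"

lemma phase_event_mono:
  "phase_event c C S e \<Longrightarrow> C' \<subseteq> C \<Longrightarrow> S \<subseteq> S' \<Longrightarrow> phase_event c C' S' e"
  by (cases e) auto

definition phase_extension :: "'a set \<Rightarrow> 'a nestate \<Rightarrow> 'a nestate \<Rightarrow> bool" where
  "phase_extension C st st' \<longleftrightarrow>
     cur st' = cur st \<and> core st \<subseteq> core st' \<and> (\<forall>l. sec st l \<subseteq> sec st' l) \<and>
     (\<exists>new. log st' = log st @ new \<and> (\<forall>e\<in>set new. phase_event (cur st) C (sec st' (cur st)) e))"

lemma phase_extension_refl: "phase_extension C st st"
  unfolding phase_extension_def by auto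

lemma phase_extension_trans:
  assumes "phase_extension C st1 st2" "phase_extension C st2 st3"
  shows "phase_extension C st1 st3"
proof -
  obtain new1 new2 where
    log2: "log st2 = log st1 @ new1" and new1: "\<forall>e\<in>set new1. phase_event (cur st1) C (sec st2 (cur st1)) e" and
    log3: "log st3 = log st2 @ new2" and new2: "\<forall>e\<in>set new2. phase_event (cur st1) C (sec st3 (cur st1)) e"
    using assms unfolding phase_extension_def by auto
  have "sec st2 (cur st1) \<subseteq> sec st3 (cur st1)"
    using assms(2) unfolding phase_extension_def by blast
  then have "\<forall>e\<in>set (new1 @ new2). phase_event (cur st1) C (sec st3 (cur st1)) e"
    using new1 new2 phase_event_mono by fastforce
  moreover have "log st3 = log st1 @ (new1 @ new2)"
    using log2 log3 by simp
  moreover have "cur st3 = cur st1" "core st1 \<subseteq> core st3" "\<forall>l. sec st1 l \<subseteq> sec st3 l"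
    using assms unfolding phase_extension_def by (simp, blast, blast)
  ultimately show ?thesis
    unfolding phase_extension_def by blast
qed

lemma phase_extension_antimono:
  assumes "phase_extension C st st'" and "C' \<subseteq> C"
  shows "phase_extension C' st st'"
  using assms phase_event_mono[where C = C and C' = C'] unfolding phase_extension_def by blast

lemma phase_extension_sec_edge: "phase_extension C st (sec_edge E k v st u)"
  unfolding phase_extension_def sec_edge_def Let_def by auto

lemma phase_extension_fold_sec_edge:
  "phase_extension C st (fold (\<lambda>u s. sec_edge E k v s u) us st)"
proof (induction us arbitrary: st)
  case Nil
  show ?case by (simp add: phase_extension_refl)
next
  case (Cons u us)
  show ?case
    using phase_extension_trans[OF phase_extension_sec_edge Cons.IH] by simp
qed

lemma phase_extension_move_sec:
  assumes "move_sec E k st v st'" and "v \<notin> C"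
  shows "phase_extension C st st'"
proof -
  define st0 where "st0 = st\<lparr>sec := (sec st)(cur st := insert v (sec st (cur st))),
    dext := (dext st)(cur st := (dext st (cur st))(v := int (card (nbrs st v)))),
    log := log st @ [SecAdd (cur st) (cur st) v, Access (cur st) v]\<rparr>"
  obtain us where "st' = fold (\<lambda>u s. sec_edge E k v s u) us st0"
    using assms(1) unfolding move_sec_def Let_def st0_def by blast
  then have "phase_extension C st0 st'"
    by (simp add: phase_extension_fold_sec_edge)
  moreover have "phase_extension C st st0"
    using assms(2) unfolding phase_extension_def st0_def by auto
  ultimately show ?thesis
    using phase_extension_trans by blast
qed

lemma phase_extension_sec_seq:
  "sec_seq E k st us st' \<Longrightarrow> set us \<inter> C = {} \<Longrightarrow> phase_extension C st st'"
proof (induction rule: sec_seq.induct)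
  case (sec_seq_Nil st)
  show ?case by (rule phase_extension_refl)
next
  case (sec_seq_Cons st u st1 us st2)
  have "phase_extension C st st1"
    using sec_seq_Cons.hyps(1) by (rule phase_extension_move_sec) (use sec_seq_Cons.prems in auto)
  moreover have "phase_extension C st1 st2"
    using sec_seq_Cons.IH sec_seq_Cons.prems by simp
  ultimately show ?case
    by (rule phase_extension_trans)
qed

lemma phase_extension_move_core:
  assumes "move_core E k st v st'" and "v \<notin> core st"
  shows "phase_extension (core st) st st'"
proof -
  define st0 where
    "st0 = st\<lparr>core := insert v (core st), log := log st @ [CoreAdd (cur st) v, Access (cur st) v]\<rparr>"
  obtain us where us: "set us = nbrs st0 v - (core st0 \<union> sec st0 (cur st))" "sec_seq E k st0 us st'"
    using assms(1) unfolding move_core_def Let_def st0_def by auto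
  have "phase_extension (core st0) st0 st'"
    using us by (intro phase_extension_sec_seq) (auto simp: st0_def)
  then have "phase_extension (core st) st0 st'"
    by (rule phase_extension_antimono) (auto simp: st0_def)
  moreover have "phase_extension (core st) st st0"
    using assms(2) unfolding phase_extension_def st0_def by auto
  ultimately show ?thesis
    using phase_extension_trans by blast
qed

text \<open>The last two conjuncts give the theorem; the others are what makes it inductive.\<close>

definition ne_log_inv :: "'a nestate \<Rightarrow> bool" where
  "ne_log_inv st \<longleftrightarrow> 1 \<le> cur st \<and>
    (\<forall>j x. Access j x \<in> set (log st) \<longrightarrow> j \<le> cur st) \<and>
    (\<forall>i x. SecAdd i i x \<in> set (log st) \<longrightarrow> 1 \<le> i \<and> i \<le> cur st \<and> x \<in> sec st i) \<and>
    (\<forall>i Cs Ss. PartDone i Cs Ss \<in> set (log st) \<longrightarrow> i < cur st \<and> Cs \<subseteq> core st) \<and>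
    (\<forall>i. 1 \<le> i \<longrightarrow> i < cur st \<longrightarrow> (\<exists>Cs Ss. PartDone i Cs Ss \<in> set (log st))) \<and>
    (\<forall>i Cs Ss x. PartDone i Cs Ss \<in> set (log st) \<longrightarrow> SecAdd i i x \<in> set (log st) \<longrightarrow> x \<in> Ss) \<and>
    (\<forall>i j Cs Ss x. PartDone i Cs Ss \<in> set (log st) \<longrightarrow> Access j x \<in> set (log st) \<longrightarrow> i < j \<longrightarrow>
       x \<notin> Cs)"

lemma ne_log_inv_init: "ne_log_inv (ne_init E)"
  unfolding ne_log_inv_def ne_init_def by auto

lemma ne_log_invD:
  assumes "ne_log_inv st"
  shows "1 \<le> cur st"
    and "Access j x \<in> set (log st) \<Longrightarrow> j \<le> cur st"
    and "SecAdd i i x \<in> set (log st) \<Longrightarrow> 1 \<le> i \<and> i \<le> cur st \<and> x \<in> sec st i"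
    and "PartDone i Cs Ss \<in> set (log st) \<Longrightarrow> i < cur st \<and> Cs \<subseteq> core st"
    and "1 \<le> i \<Longrightarrow> i < cur st \<Longrightarrow> \<exists>Cs Ss. PartDone i Cs Ss \<in> set (log st)"
    and "PartDone i Cs Ss \<in> set (log st) \<Longrightarrow> SecAdd i i x \<in> set (log st) \<Longrightarrow> x \<in> Ss"
    and "PartDone i Cs Ss \<in> set (log st) \<Longrightarrow> Access j x \<in> set (log st) \<Longrightarrow> i < j \<Longrightarrow> x \<notin> Cs"
  using assms unfolding ne_log_inv_def by blast+

lemma ne_log_inv_phase_extension:
  assumes inv: "ne_log_inv st" and ext: "phase_extension (core st) st st'"
  shows "ne_log_inv st'"
proof -
  obtain new where log': "set (log st') = set (log st) \<union> set new"
    and new: "\<forall>e\<in>set new. phase_event (cur st) (core st) (sec st' (cur st)) e"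
    using ext unfolding phase_extension_def by auto
  have cur': "cur st' = cur st" and core': "core st \<subseteq> core st'" and sec': "sec st i \<subseteq> sec st' i" for i
    using ext unfolding phase_extension_def by auto
  have new_Access: "j = cur st \<and> x \<notin> core st" if "Access j x \<in> set new" for j x
    using new that by fastforce
  have new_SecAdd: "i = cur st \<and> x \<in> sec st' i" if "SecAdd i i x \<in> set new" for i x
    using new that by fastforce
  have no_PartDone: "PartDone i Cs Ss \<notin> set new" for i Cs Ss
    using new by fastforce
  note old = ne_log_invD[OF inv]
  show ?thesis
    unfolding ne_log_inv_def log' cur' Un_iff
  proof (intro conjI allI impI)
    show "1 \<le> cur st"
      by (fact old(1))
  next
    fix j x assume "Access j x \<in> set (log st) \<or> Access j x \<in> set new"
    then show "j \<le> cur st"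
      using old(2) new_Access by fastforce
  next
    fix i x assume "SecAdd i i x \<in> set (log st) \<or> SecAdd i i x \<in> set new"
    then show "1 \<le> i" "i \<le> cur st" "x \<in> sec st' i"
      using old(1,3) new_SecAdd sec' by blast+
  next
    fix i Cs Ss assume "PartDone i Cs Ss \<in> set (log st) \<or> PartDone i Cs Ss \<in> set new"
    then show "i < cur st" "Cs \<subseteq> core st'"
      using old(4) no_PartDone core' by blast+
  next
    fix i assume "1 \<le> i" "i < cur st"
    then show "\<exists>Cs Ss. PartDone i Cs Ss \<in> set (log st) \<or> PartDone i Cs Ss \<in> set new"
      using old(5) by blast
  next
    fix i Cs Ss x
    assume "PartDone i Cs Ss \<in> set (log st) \<or> PartDone i Cs Ss \<in> set new"
      and "SecAdd i i x \<in> set (log st) \<or> SecAdd i i x \<in> set new"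
    then show "x \<in> Ss"
      using old(4,6) no_PartDone new_SecAdd by blast
  next
    fix i j Cs Ss x
    assume "PartDone i Cs Ss \<in> set (log st) \<or> PartDone i Cs Ss \<in> set new"
      and "Access j x \<in> set (log st) \<or> Access j x \<in> set new" and "i < j"
    then show "x \<notin> Cs"
      using old(4,7) no_PartDone new_Access by blast
  qed
qed

lemma ne_log_inv_next_part:
  assumes inv: "ne_log_inv st"
    and st': "st' = st\<lparr>cur := Suc (cur st),
                       log := log st @ [PartDone (cur st) (core st) (sec st (cur st))]\<rparr>"
  shows "ne_log_inv st'"
proof -
  let ?done = "PartDone (cur st) (core st) (sec st (cur st))"
  have log': "set (log st') = insert ?done (set (log st))" and cur': "cur st' = Suc (cur st)"
    and core': "core st' = core st" and sec': "sec st' = sec st"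
    using st' by simp_all
  note old = ne_log_invD[OF inv]
  show ?thesis
    unfolding ne_log_inv_def log' cur' core' sec' insert_iff
  proof (intro conjI allI impI)
    show "1 \<le> Suc (cur st)"
      by simp
  next
    fix j x assume "Access j x = ?done \<or> Access j x \<in> set (log st)"
    then show "j \<le> Suc (cur st)"
      using old(2) by fastforce
  next
    fix i x assume "SecAdd i i x = ?done \<or> SecAdd i i x \<in> set (log st)"
    then show "1 \<le> i" "i \<le> Suc (cur st)" "x \<in> sec st i"
      using old(3) by fastforce+
  next
    fix i Cs Ss assume "PartDone i Cs Ss = ?done \<or> PartDone i Cs Ss \<in> set (log st)"
    then show "i < Suc (cur st)" "Cs \<subseteq> core st"
      using old(4) by fastforce+
  next
    fix i assume "1 \<le> i" "i < Suc (cur st)"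
    then show "\<exists>Cs Ss. PartDone i Cs Ss = ?done \<or> PartDone i Cs Ss \<in> set (log st)"
      using old(5) less_Suc_eq by blast
  next
    fix i Cs Ss x
    assume "PartDone i Cs Ss = ?done \<or> PartDone i Cs Ss \<in> set (log st)"
      and "SecAdd i i x = ?done \<or> SecAdd i i x \<in> set (log st)"
    then show "x \<in> Ss"
      using old(3,6) by fastforce
  next
    fix i j Cs Ss x
    assume "PartDone i Cs Ss = ?done \<or> PartDone i Cs Ss \<in> set (log st)"
      and "Access j x = ?done \<or> Access j x \<in> set (log st)" and "i < j"
    then show "x \<notin> Cs"
      using old(2,7) by fastforce
  qed
qed

lemma ne_log_inv_step: "ne_step V E k st st' \<Longrightarrow> ne_log_inv st \<Longrightarrow> ne_log_inv st'"
proof (induction rule: ne_step.induct)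
  case (expand st v st')
  then show ?case
    by (blast intro: ne_log_inv_phase_extension phase_extension_move_core)
next
  case (initialize st v st')
  then show ?case
    by (blast intro: ne_log_inv_phase_extension phase_extension_move_core)
next
  case (next_part st st')
  then show ?case
    by (blast intro: ne_log_inv_next_part)
qed

lemma ne_log_inv_reachable: "ne_reachable V E k st \<Longrightarrow> ne_log_inv st"
  unfolding ne_reachable_def
  by (induction rule: rtranclp_induct) (auto intro: ne_log_inv_init ne_log_inv_step)

theorem theorem1:
  fixes V :: "'a set" and E :: "'a set set" and k i j :: nat and v :: 'a and st :: "'a nestate"
  assumes "finite V"
    and "E \<subseteq> {{u, w} | u w. u \<in> V \<and> w \<in> V \<and> u \<noteq> w}"
    and "1 < k"
    and "ne_reachable V E k st"
    and "SecAdd i i v \<in> set (log st)"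
    and "Access j v \<in> set (log st)"
    and "i < j"
  shows "\<exists>Cs Ss. PartDone i Cs Ss \<in> set (log st) \<and> v \<in> Ss \<and> v \<notin> Cs"
proof -
  have inv: "ne_log_inv st"
    using assms(4) by (rule ne_log_inv_reachable)
  have "1 \<le> i" and "i < cur st"
    using ne_log_invD(2,3)[OF inv] assms(5-7) by fastforce+
  then obtain Cs Ss where "PartDone i Cs Ss \<in> set (log st)"
    using ne_log_invD(5)[OF inv] by blast
  then show ?thesis
    using ne_log_invD(6,7)[OF inv] assms(5-7) by blast
qed

end
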